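(* Let $m\ge 9$, $T=A_m$, $G\in\{A_m,S_m\}$, and let $H=(S_k\wr S_r)\cap G$ with $m=kr$ and $1<k<m$ be a maximal imprimitive subgroup of $G$. Consider $G$ acting on $\Omega$, the set of partitions of $\{1,\dots,m\}$ into $r$ subsets each of size $k$, so $n=\frac{(kr)!}{(k!)^r r!}$. Then $\mathrm{ifix}(T)>n^{1/2}$.
   Context: $\mathrm{ifix}(T)=\max\{\mathrm{fix}(t): t\in T \text{ an involution}\}$, where $\mathrm{fix}(t)$ is the number of points of $\Omega$ fixed by $t$. *)

theory Defs
  imports Complex_Main "HOL-Algebra.Sym_Groups" "HOL-Library.Disjoint_Sets"
begin

definition uniform_partitions :: "nat \<Rightarrow> nat \<Rightarrow> nat \<Rightarrow> nat set set set" where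
  "uniform_partitions m k r =
     {P. partition_on {1..m} P \<and> card P = r \<and> (\<forall>B\<in>P. card B = k)}"

definition act_part :: "(nat \<Rightarrow> nat) \<Rightarrow> nat set set \<Rightarrow> nat set set" where
  "act_part p P = (\<lambda>B. p ` B) ` P"

definition fix_count :: "nat set set set \<Rightarrow> (nat \<Rightarrow> nat) \<Rightarrow> nat" where
  "fix_count \<Omega> t = card {P \<in> \<Omega>. act_part t P = P}"

definition is_involution :: "(nat \<Rightarrow> nat) \<Rightarrow> bool" where
  "is_involution t \<longleftrightarrow> t \<noteq> id \<and> t \<circ> t = id"

definition ifix :: "(nat \<Rightarrow> nat) set \<Rightarrow> nat set set set \<Rightarrow> nat" where
  "ifix T \<Omega> = Max {fix_count \<Omega> t | t. t \<in> T \<and> is_involution t}"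

definition maximal_subgroup :: "'a set \<Rightarrow> ('a, 'b) monoid_scheme \<Rightarrow> bool" where
  "maximal_subgroup H G \<longleftrightarrow> subgroup H G \<and> H \<noteq> carrier G \<and>
     (\<forall>K. subgroup K G \<and> H \<subseteq> K \<longrightarrow> K = H \<or> K = carrier G)"

end

theory Submission
  imports Defs "HOL.Binomial_Plus"
begin

(* Write N_k(n) for the number of partitions of an n-set into blocks of size k; fixing the block
   of one point gives N_k(n) = C(n-1, k-1) N_k(n-k), and |Omega| = N_k(m).  The even involution
   tau = (1 2)(3 4) fixes every partition having a block through 1 and 2 and another through 3
   and 4; for k >= 3 these alone number C(m-4, k-2) C(m-k-2, k-2) N_k(m-2k), while for k = 2 one
   also counts the other two matchings of {1,2,3,4}, which tau permutes, to get 3 N_2(m-4).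
   Expanding N_k(m) twice by the recursion and absorbing binomial coefficients reduces the
   inequality N_k(m) < fix(tau)^2 to an elementary polynomial estimate valid for m >= 9. *)

definition block_partitions :: "'a set \<Rightarrow> nat \<Rightarrow> 'a set set set" where
  "block_partitions D k = {P. partition_on D P \<and> (\<forall>B\<in>P. card B = k)}"

text \<open>The value at \<open>k = 0\<close> is junk; the count is only used for \<open>0 < k\<close>.\<close>

function block_partition_count :: "nat \<Rightarrow> nat \<Rightarrow> nat" where
  "block_partition_count k n =
     (if n = 0 \<or> k = 0 then 1 else if n < k then 0
      else ((n - 1) choose (k - 1)) * block_partition_count k (n - k))"
  by auto
termination by (relation "measure snd") auto

declare block_partition_count.simps[simp del]

lemma block_partition_count_step:
  "0 < k \<Longrightarrow> k \<le> n \<Longrightarrow>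
   block_partition_count k n = ((n - 1) choose (k - 1)) * block_partition_count k (n - k)"
  by (subst block_partition_count.simps) simp

lemma block_partition_count_mult_pos: "0 < k \<Longrightarrow> 0 < block_partition_count k (k * j)"
  by (induction j) (simp_all add: block_partition_count.simps)

lemma block_partitions_empty: "block_partitions {} k = {{}}"
  by (auto simp: block_partitions_def partition_on_empty)

lemma finite_block_partitions: "finite D \<Longrightarrow> finite (block_partitions D k)"
  by (rule finite_subset[of _ "{P. partition_on D P}"])
     (auto simp: block_partitions_def finitely_many_partition_on)

lemma block_partitions_block_subset: "Q \<in> block_partitions E k \<Longrightarrow> B \<in> Q \<Longrightarrow> B \<subseteq> E"
  unfolding block_partitions_def using partition_onD1 by blast

lemma insert_in_block_partitions:
  assumes "X \<subseteq> D" "card X = k" "X \<noteq> {}" "Q \<in> block_partitions (D - X) k"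
  shows "insert X Q \<in> block_partitions D k"
proof -
  have Q: "partition_on (D - X) Q" using assms(4) by (simp add: block_partitions_def)
  have "disjnt X (\<Union>Q)" using partition_onD1[OF Q] by (auto simp: disjnt_def)
  then have "partition_on D (insert X Q)"
    using partition_on_insert[of X Q D] Q assms by auto
  then show ?thesis using assms by (auto simp: block_partitions_def)
qed

lemma UN_insert_block_subset_block_partitions:
  assumes "finite D" "x \<in> D" "0 < k"
    and AA: "AA \<subseteq> {A. A \<subseteq> D - {x} \<and> card A = k - 1}"
    and G: "\<And>A. A \<in> AA \<Longrightarrow> G A \<subseteq> block_partitions (D - insert x A) k"
  shows "(\<Union>A\<in>AA. insert (insert x A) ` G A) \<subseteq> block_partitions D k"
proof
  fix P assume "P \<in> (\<Union>A\<in>AA. insert (insert x A) ` G A)"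
  then obtain A Q where A: "A \<in> AA" and Q: "Q \<in> G A" and P: "P = insert (insert x A) Q"
    by auto
  have "finite A" "x \<notin> A" "card A = k - 1" using A AA \<open>finite D\<close> by (auto intro: finite_subset)
  then have "card (insert x A) = k" using \<open>0 < k\<close> by simp
  then show "P \<in> block_partitions D k" unfolding P
    using insert_in_block_partitions[of "insert x A" D k Q] A Q G AA \<open>x \<in> D\<close> by auto
qed

lemma card_UN_insert_block:
  assumes "finite D" "x \<in> D"
    and AA: "AA \<subseteq> {A. A \<subseteq> D - {x} \<and> card A = k - 1}"
    and G: "\<And>A. A \<in> AA \<Longrightarrow> G A \<subseteq> block_partitions (D - insert x A) k"
  shows "card (\<Union>A\<in>AA. insert (insert x A) ` G A) = (\<Sum>A\<in>AA. card (G A))"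
proof -
  have x_notin: "x \<notin> \<Union>Q" if "A \<in> AA" "Q \<in> G A" for A Q
    using G[OF that(1)] that(2) partition_onD1[of "D - insert x A" Q]
    by (auto simp: block_partitions_def)
  have inj: "inj_on (insert (insert x A)) (G A)" if "A \<in> AA" for A
  proof (rule inj_onI)
    fix Q1 Q2 assume "Q1 \<in> G A" "Q2 \<in> G A" "insert (insert x A) Q1 = insert (insert x A) Q2"
    moreover have "insert x A \<notin> Q" if "Q \<in> G A" for Q
      using x_notin[OF \<open>A \<in> AA\<close> that] by auto
    ultimately show "Q1 = Q2" by (metis insert_ident)
  qed
  have disjoint: "insert (insert x A) ` G A \<inter> insert (insert x A') ` G A' = {}"
    if "A \<in> AA" "A' \<in> AA" "A \<noteq> A'" for A A'
  proof -
    have "x \<notin> A" "x \<notin> A'" using that(1,2) AA by auto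
    then have "insert x A \<noteq> insert x A'" using that(3) by (metis insert_ident)
    have False if "Q \<in> G A" "Q' \<in> G A'"
      and "insert (insert x A) Q = insert (insert x A') Q'" for Q Q'
    proof -
      have "insert x A \<in> insert (insert x A') Q'" using that(3) by blast
      then show False using \<open>insert x A \<noteq> insert x A'\<close> x_notin[OF \<open>A' \<in> AA\<close> that(2)] by auto
    qed
    then show ?thesis by blast
  qed
  have "finite AA" by (rule finite_subset[OF AA]) (use \<open>finite D\<close> in auto)
  moreover have "finite (insert (insert x A) ` G A)" if "A \<in> AA" for A
    using G[OF that] finite_block_partitions[of "D - insert x A" k] \<open>finite D\<close>
    by (meson finite_Diff finite_imageI finite_subset)
  ultimately have "card (\<Union>A\<in>AA. insert (insert x A) ` G A)
      = (\<Sum>A\<in>AA. card (insert (insert x A) ` G A))"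
    using disjoint by (intro card_UN_disjoint) auto
  also have "\<dots> = (\<Sum>A\<in>AA. card (G A))"
    by (rule sum.cong) (auto intro: card_image inj)
  finally show ?thesis .
qed

lemma block_partitions_subset_UN_insert_block:
  assumes "finite D" "x \<in> D"
  shows "block_partitions D k \<subseteq>
    (\<Union>A\<in>{A. A \<subseteq> D - {x} \<and> card A = k - 1}.
       insert (insert x A) ` block_partitions (D - insert x A) k)"
proof
  fix P assume "P \<in> block_partitions D k"
  then have P: "partition_on D P" and card_P: "\<forall>B\<in>P. card B = k"
    by (auto simp: block_partitions_def)
  obtain X where X: "X \<in> P" "x \<in> X" using partition_onD1[OF P] assms(2) by auto
  have "X \<subseteq> D" using partition_onD1[OF P] X by auto
  define A where "A = X - {x}"
  have X_eq: "X = insert x A" using X A_def by auto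
  have "card A = k - 1"
    using card_P X \<open>X \<subseteq> D\<close> \<open>finite D\<close> by (simp add: A_def finite_subset)
  have "disjnt X (\<Union>(P - {X}))"
    using partition_onD2[OF P] X by (auto simp: disjnt_def disjoint_def)
  moreover have "partition_on D (insert X (P - {X}))" using P X by (simp add: insert_absorb)
  ultimately have "partition_on (D - X) (P - {X})" using partition_on_insert by blast
  then have "P - {X} \<in> block_partitions (D - insert x A) k"
    using card_P X_eq by (auto simp: block_partitions_def)
  moreover have "P = insert (insert x A) (P - {X})" using X X_eq by auto
  moreover have "A \<subseteq> D - {x}" using \<open>X \<subseteq> D\<close> A_def by auto
  ultimately show "P \<in> (\<Union>A\<in>{A. A \<subseteq> D - {x} \<and> card A = k - 1}.
       insert (insert x A) ` block_partitions (D - insert x A) k)"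
    using \<open>card A = k - 1\<close> by blast
qed

lemma card_block_partitions:
  "finite D \<Longrightarrow> 0 < k \<Longrightarrow> card (block_partitions D k) = block_partition_count k (card D)"
proof (induction "card D" arbitrary: D rule: less_induct)
  case less
  show ?case
  proof (cases "D = {}")
    case True
    then show ?thesis by (simp add: block_partitions_empty block_partition_count.simps)
  next
    case False
    then obtain x where x: "x \<in> D" by auto
    have "0 < card D" using False less.prems by auto
    show ?thesis
    proof (cases "card D < k")
      case True
      have "block_partitions D k = {}"
      proof (rule ccontr)
        assume "block_partitions D k \<noteq> {}"
        then obtain P where P: "partition_on D P" "\<forall>B\<in>P. card B = k"
          by (auto simp: block_partitions_def)
        obtain X where "X \<in> P" "x \<in> X" using partition_onD1[OF P(1)] x by auto
        then have "X \<subseteq> D" "card X = k" using P partition_onD1[OF P(1)] by auto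
        then show False using card_mono[OF less.prems(1) \<open>X \<subseteq> D\<close>] True by linarith
      qed
      then show ?thesis using True \<open>0 < card D\<close> by (simp add: block_partition_count.simps)
    next
      case False
      define AA where "AA = {A. A \<subseteq> D - {x} \<and> card A = k - 1}"
      have eq: "block_partitions D k
          = (\<Union>A\<in>AA. insert (insert x A) ` block_partitions (D - insert x A) k)"
      proof (rule equalityI)
        show "block_partitions D k
            \<subseteq> (\<Union>A\<in>AA. insert (insert x A) ` block_partitions (D - insert x A) k)"
          using block_partitions_subset_UN_insert_block[OF less.prems(1) x] unfolding AA_def .
        show "(\<Union>A\<in>AA. insert (insert x A) ` block_partitions (D - insert x A) k)
            \<subseteq> block_partitions D k"
          by (rule UN_insert_block_subset_block_partitions[OF less.prems(1) x less.prems(2)])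
             (auto simp: AA_def)
      qed
      have card_rest: "card (D - insert x A) = card D - k" if "A \<in> AA" for A
      proof -
        have "finite A" "x \<notin> A" "card A = k - 1" "insert x A \<subseteq> D"
          using that less.prems(1) x by (auto simp: AA_def intro: finite_subset)
        then show ?thesis using less.prems by (simp add: card_Diff_subset)
      qed
      have "card (block_partitions D k) = (\<Sum>A\<in>AA. card (block_partitions (D - insert x A) k))"
        unfolding eq by (rule card_UN_insert_block[OF less.prems(1) x]) (auto simp: AA_def)
      also have "\<dots> = (\<Sum>A\<in>AA. block_partition_count k (card D - k))"
      proof (rule sum.cong[OF refl])
        fix A assume A: "A \<in> AA"
        then have "card (D - insert x A) < card D" using card_rest less.prems \<open>0 < card D\<close> by simp
        then show "card (block_partitions (D - insert x A) k) = block_partition_count k (card D - k)"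
          using less.hyps[of "D - insert x A"] less.prems card_rest[OF A] by simp
      qed
      also have "\<dots> = card AA * block_partition_count k (card D - k)" by simp
      also have "card AA = (card D - 1) choose (k - 1)"
        unfolding AA_def using n_subsets[of "D - {x}" "k - 1"] less.prems x by simp
      finally show ?thesis
        using False less.prems by (simp add: block_partition_count_step)
    qed
  qed
qed

lemma uniform_partitions_eq_block_partitions:
  assumes "m = k * r" "0 < k"
  shows "uniform_partitions m k r = block_partitions {1..m} k"
proof (rule equalityI)
  show "uniform_partitions m k r \<subseteq> block_partitions {1..m} k"
    by (auto simp: uniform_partitions_def block_partitions_def)
  show "block_partitions {1..m} k \<subseteq> uniform_partitions m k r"
  proof
    fix P assume "P \<in> block_partitions {1..m} k"
    then have P: "partition_on {1..m} P" and card_P: "\<forall>B\<in>P. card B = k"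
      by (auto simp: block_partitions_def)
    have "\<And>B. B \<in> P \<Longrightarrow> finite B" using partition_onD1[OF P]
      by (metis Union_upper finite_atLeastAtMost finite_subset)
    then have "card {1..m} = (\<Sum>B\<in>P. card B)" by (rule product_partition[OF P])
    also have "\<dots> = card P * k" using card_P by simp
    finally have "card P = r" using assms by simp
    then show "P \<in> uniform_partitions m k r" using P card_P by (auto simp: uniform_partitions_def)
  qed
qed

lemma card_subsets_containing:
  assumes "finite E" "y \<in> E" "0 < j"
  shows "card {A. A \<subseteq> E \<and> card A = j \<and> y \<in> A} = card (E - {y}) choose (j - 1)"
proof -
  have eq: "{A. A \<subseteq> E \<and> card A = j \<and> y \<in> A} = insert y ` {A. A \<subseteq> E - {y} \<and> card A = j - 1}"
  proof (rule equalityI; rule subsetI)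
    fix A assume A: "A \<in> {A. A \<subseteq> E \<and> card A = j \<and> y \<in> A}"
    then have "finite A" using assms(1) finite_subset by auto
    then have "A - {y} \<in> {A. A \<subseteq> E - {y} \<and> card A = j - 1}" "A = insert y (A - {y})"
      using A by auto
    then show "A \<in> insert y ` {A. A \<subseteq> E - {y} \<and> card A = j - 1}" by blast
  next
    fix A assume "A \<in> insert y ` {A. A \<subseteq> E - {y} \<and> card A = j - 1}"
    then obtain A' where A': "A' \<subseteq> E - {y}" "card A' = j - 1" "A = insert y A'" by auto
    then have "finite A'" "y \<notin> A'" using assms(1) finite_subset by auto
    then show "A \<in> {A. A \<subseteq> E \<and> card A = j \<and> y \<in> A}" using A' assms by auto
  qed
  have inj: "inj_on (insert y) {A. A \<subseteq> E - {y} \<and> card A = j - 1}"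
    by (rule inj_onI) (metis (no_types, lifting) Diff_insert_absorb mem_Collect_eq subset_Diff_insert)
  show ?thesis unfolding eq card_image[OF inj] using n_subsets[of "E - {y}" "j - 1"] assms by simp
qed

definition two_block_family ::
    "'a set \<Rightarrow> nat \<Rightarrow> 'a \<Rightarrow> 'a set set \<Rightarrow> ('a set \<Rightarrow> 'a) \<Rightarrow> ('a set \<Rightarrow> 'a) \<Rightarrow> 'a set set set" where
  "two_block_family D k x AA z w = (\<Union>A\<in>AA. insert (insert x A) `
      (\<Union>C\<in>{C. C \<subseteq> D - insert x A - {z A} \<and> card C = k - 1 \<and> w A \<in> C}.
          insert (insert (z A) C) ` block_partitions (D - insert x A - insert (z A) C) k))"

lemma two_block_familyE:
  assumes "P \<in> two_block_family D k x AA z w"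
  obtains A C Q where "A \<in> AA" "C \<subseteq> D - insert x A - {z A}" "w A \<in> C" "card C = k - 1"
    "Q \<in> block_partitions (D - insert x A - insert (z A) C) k"
    "P = insert (insert x A) (insert (insert (z A) C) Q)"
  using assms unfolding two_block_family_def by blast

lemma two_block_family_subset_card:
  assumes "finite D" "x \<in> D" "2 \<le> k" "card D = n"
    and AA: "AA \<subseteq> {A. A \<subseteq> D - {x} \<and> card A = k - 1}"
    and zw: "\<And>A. A \<in> AA \<Longrightarrow> z A \<in> D - insert x A \<and> w A \<in> D - insert x A \<and> w A \<noteq> z A"
  shows "two_block_family D k x AA z w \<subseteq> block_partitions D k"
    and "card (two_block_family D k x AA z w)
           = card AA * (((n - k - 2) choose (k - 2)) * block_partition_count k (n - 2 * k))"
proof -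
  define CC where "CC A = {C. C \<subseteq> D - insert x A - {z A} \<and> card C = k - 1 \<and> w A \<in> C}" for A
  define inner where "inner A = (\<Union>C\<in>CC A.
      insert (insert (z A) C) ` block_partitions (D - insert x A - insert (z A) C) k)" for A
  have family_eq: "two_block_family D k x AA z w = (\<Union>A\<in>AA. insert (insert x A) ` inner A)"
    unfolding two_block_family_def inner_def CC_def ..
  have card_rest: "card (D - insert x A) = n - k" if "A \<in> AA" for A
  proof -
    have "finite A" "x \<notin> A" "card A = k - 1" "insert x A \<subseteq> D"
      using that AA \<open>finite D\<close> \<open>x \<in> D\<close> by (auto intro: finite_subset)
    then show ?thesis using assms(3,4) by (simp add: card_Diff_subset)
  qed
  have inner: "inner A \<subseteq> block_partitions (D - insert x A) k \<and>
      card (inner A) = ((n - k - 2) choose (k - 2)) * block_partition_count k (n - 2 * k)"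
    if A: "A \<in> AA" for A
  proof -
    let ?D = "D - insert x A"
    have fin: "finite ?D" using \<open>finite D\<close> by simp
    have z: "z A \<in> ?D" using zw[OF A] by simp
    have CC: "CC A \<subseteq> {C. C \<subseteq> ?D - {z A} \<and> card C = k - 1}" unfolding CC_def by auto
    have sub: "inner A \<subseteq> block_partitions ?D k"
      unfolding inner_def
      by (rule UN_insert_block_subset_block_partitions[OF fin z _ CC]) (use assms(3) in auto)
    have "card (inner A) = (\<Sum>C\<in>CC A. card (block_partitions (?D - insert (z A) C) k))"
      unfolding inner_def by (rule card_UN_insert_block[OF fin z CC]) auto
    also have "\<dots> = (\<Sum>C\<in>CC A. block_partition_count k (n - 2 * k))"
    proof (rule sum.cong[OF refl])
      fix C assume "C \<in> CC A"
      then have "finite C" "z A \<notin> C" "card C = k - 1" "insert (z A) C \<subseteq> ?D"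
        using z fin by (auto simp: CC_def intro: finite_subset)
      then have "card (?D - insert (z A) C) = n - 2 * k"
        using card_rest[OF A] assms(3) by (simp add: card_Diff_subset)
      then show "card (block_partitions (?D - insert (z A) C) k) = block_partition_count k (n - 2 * k)"
        using card_block_partitions[of "?D - insert (z A) C" k] \<open>finite D\<close> assms(3) by simp
    qed
    also have "\<dots> = card (CC A) * block_partition_count k (n - 2 * k)" by simp
    also have "card (CC A) = (n - k - 2) choose (k - 2)"
    proof -
      have "card (CC A) = card (?D - {z A} - {w A}) choose (k - 1 - 1)"
        unfolding CC_def by (rule card_subsets_containing) (use fin zw[OF A] assms(3) in auto)
      moreover have "card (?D - {z A} - {w A}) = n - k - 2"
        using card_rest[OF A] zw[OF A] fin by (simp add: card_Diff_singleton)
      ultimately show ?thesis by (simp add: numeral_2_eq_2)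
    qed
    finally show ?thesis using sub by simp
  qed
  show "two_block_family D k x AA z w \<subseteq> block_partitions D k"
    unfolding family_eq
    by (rule UN_insert_block_subset_block_partitions[OF \<open>finite D\<close> \<open>x \<in> D\<close> _ AA])
       (use inner assms(3) in auto)
  have "card (two_block_family D k x AA z w) = (\<Sum>A\<in>AA. card (inner A))"
    unfolding family_eq by (rule card_UN_insert_block[OF \<open>finite D\<close> \<open>x \<in> D\<close> AA]) (use inner in auto)
  also have "\<dots> = (\<Sum>A\<in>AA. ((n - k - 2) choose (k - 2)) * block_partition_count k (n - 2 * k))"
    by (rule sum.cong) (use inner in auto)
  finally show "card (two_block_family D k x AA z w)
      = card AA * (((n - k - 2) choose (k - 2)) * block_partition_count k (n - 2 * k))"
    by simp
qed

lemma image_eq_if_involution: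
  assumes "f \<circ> f = id" "\<And>x. x \<in> S \<Longrightarrow> f x \<in> S"
  shows "f ` S = S"
proof
  show "f ` S \<subseteq> S" using assms(2) by auto
  show "S \<subseteq> f ` S"
  proof
    fix x assume "x \<in> S"
    then have "x = f (f x)" "f x \<in> S" using assms by (auto simp: fun_eq_iff)
    then show "x \<in> f ` S" by blast
  qed
qed

lemma act_part_eq_if_involution:
  assumes "t \<circ> t = id" "\<And>B. B \<in> P \<Longrightarrow> t ` B \<in> P"
  shows "act_part t P = P"
proof -
  have "(\<lambda>B. t ` B) \<circ> (\<lambda>B. t ` B) = id"
    using assms(1) by (auto simp: fun_eq_iff image_comp)
  then show ?thesis unfolding act_part_def using assms(2) by (rule image_eq_if_involution)
qed

definition tau :: "nat \<Rightarrow> nat" where "tau = transpose 1 2 \<circ> transpose 3 4"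

lemma tau_simps: "tau 1 = 2" "tau 2 = 1" "tau 3 = 4" "tau 4 = 3"
  "x \<notin> {1, 2, 3, 4} \<Longrightarrow> tau x = x"
  by (auto simp: tau_def transpose_def)

lemma tau_tau: "tau \<circ> tau = id"
  by (auto simp: tau_def transpose_def fun_eq_iff)

lemma is_involution_tau: "is_involution tau"
proof -
  have "tau \<noteq> id"
  proof
    assume "tau = id"
    then show False using tau_simps(1) by simp
  qed
  then show ?thesis using tau_tau unfolding is_involution_def by simp
qed

lemma tau_in_alt_group: "4 \<le> m \<Longrightarrow> tau \<in> carrier (alt_group m)"
proof -
  assume "4 \<le> m"
  then have "transpose 1 2 permutes {1..m}" "transpose 3 4 permutes {1..m}"
    by (auto intro!: permutes_swap_id)
  then have "tau permutes {1..m}" unfolding tau_def by (rule permutes_compose[rotated])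
  moreover have "evenperm tau"
  proof -
    have perms: "permutation (transpose (1::nat) 2)" "permutation (transpose (3::nat) 4)"
      by (rule permutation_swap_id)+
    have "evenperm (transpose (1::nat) 2) = evenperm (transpose (3::nat) 4)"
      by (simp only: evenperm_swap) simp
    then show ?thesis unfolding tau_def using evenperm_comp[OF perms] by simp
  qed
  ultimately show ?thesis by (simp add: alt_group_def sym_group_def)
qed

lemma tau_image_eq:
  assumes "1 \<in> B \<longleftrightarrow> 2 \<in> B" "3 \<in> B \<longleftrightarrow> 4 \<in> B"
  shows "tau ` B = B"
proof (rule image_eq_if_involution[OF tau_tau])
  fix x assume "x \<in> B"
  then show "tau x \<in> B"
    using assms tau_simps by (cases "x \<in> {1, 2, 3, 4}") auto
qed

lemma cubic_lt_binomial_product: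
  assumes "9 \<le> m" "3 \<le> k" "2 * k \<le> m"
  shows "(m-1)*(m-2)*(m-3) < ((m-4) choose (k-2)) * ((m-k-2) choose (k-2)) * (k-1)^2 * (m-k)"
proof (cases "k = 3")
  case True
  obtain j where "m = j + 9" using assms(1) by (metis add.commute le_add_diff_inverse)
  then show ?thesis using True by (simp add: algebra_simps power2_eq_square)
next
  case False
  then have "4 \<le> k" using assms(2) by simp
  have "(m-4) choose 2 \<le> (m-4) choose (k-2)"
    by (rule binomial_mono) (use \<open>4 \<le> k\<close> assms in auto)
  moreover have "2 * ((m-4) choose 2) = (m-4)*(m-5)"
    using binomial_absorption[of 1 "m-4"] by (simp add: numeral_2_eq_2)
  ultimately have X: "(m-4)*(m-5) \<le> 2 * ((m-4) choose (k-2))" by linarith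
  have "0 < (m-k-2) choose (k-2)" using assms by (intro zero_less_binomial) linarith
  then have Y: "1 \<le> (m-k-2) choose (k-2)" by linarith
  have "3*3 \<le> (k-1)*(k-1)" using \<open>4 \<le> k\<close> mult_le_mono[of 3 "k-1" 3 "k-1"] by linarith
  then have K: "9 \<le> (k-1)^2" by (simp add: power2_eq_square)
  have M: "m \<le> 2 * (m-k)" using assms by simp
  obtain j where "m = j + 9" using assms(1) by (metis add.commute le_add_diff_inverse)
  then have "4*((m-1)*(m-2)*(m-3)) < 9*m*((m-4)*(m-5))" by (simp add: algebra_simps)
  also have "\<dots> \<le> (k-1)^2 * (2*(m-k)) * (2 * ((m-4) choose (k-2)))"
    by (intro mult_le_mono K M X)
  also have "\<dots> \<le> (k-1)^2 * (2*(m-k)) * (2 * ((m-4) choose (k-2))) * ((m-k-2) choose (k-2))"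
    using Y by (metis mult.right_neutral mult_le_mono2)
  finally show ?thesis by (simp add: ac_simps)
qed

lemma binomial_triple_absorption:
  assumes "2 \<le> k" "k + 3 \<le> m"
  shows "(k-1)*(m-k)*(m-k-1)*((m-1) choose (k-1)) = (m-1)*(m-2)*(m-3)*((m-4) choose (k-2))"
proof -
  have "Suc (k-2) = k-1" "m-1-1 = m-2" "m-2-(k-2) = m-k" "m-2-1 = m-3" "m-3-(k-2) = m-k-1"
    "m-3-1 = m-4" using assms by auto
  then have a1: "(k-1) * ((m-1) choose (k-1)) = (m-1) * ((m-2) choose (k-2))"
    and a2: "(m-k) * ((m-2) choose (k-2)) = (m-2) * ((m-3) choose (k-2))"
    and a3: "(m-k-1) * ((m-3) choose (k-2)) = (m-3) * ((m-4) choose (k-2))"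
    using binomial_absorption[of "k-2" "m-1"] binomial_absorb_comp[of "m-2" "k-2"]
      binomial_absorb_comp[of "m-3" "k-2"] by simp_all
  have "(k-1)*(m-k)*(m-k-1)*((m-1) choose (k-1)) = (m-k)*(m-k-1)*((k-1) * ((m-1) choose (k-1)))"
    by (simp add: ac_simps)
  also have "\<dots> = (m-1)*(m-k-1)*((m-k) * ((m-2) choose (k-2)))" unfolding a1 by (simp add: ac_simps)
  also have "\<dots> = (m-1)*(m-2)*((m-k-1) * ((m-3) choose (k-2)))" unfolding a2 by (simp add: ac_simps)
  also have "\<dots> = (m-1)*(m-2)*(m-3)*((m-4) choose (k-2))" unfolding a3 by (simp add: ac_simps)
  finally show ?thesis .
qed

lemma binomial_product_lt_square:
  assumes "9 \<le> m" "3 \<le> k" "2 * k \<le> m"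
  shows "((m-1) choose (k-1)) * ((m-k-1) choose (k-1))
           < (((m-4) choose (k-2)) * ((m-k-2) choose (k-2)))^2"
proof -
  define X where "X = (m-4) choose (k-2)"
  define Y where "Y = (m-k-2) choose (k-2)"
  define Z where "Z = (k-1)^2 * (m-k) * (m-k-1)"
  \<comment> \<open>after multiplying by \<open>Z\<close>, absorption turns the left side into \<open>X Y (m-1)(m-2)(m-3)(m-k-1)\<close>\<close>
  have i1: "(k-1)*(m-k)*(m-k-1)*((m-1) choose (k-1)) = (m-1)*(m-2)*(m-3)*X"
    unfolding X_def by (rule binomial_triple_absorption) (use assms in linarith)+
  have "Suc (k-2) = k-1" "m-k-1-1 = m-k-2" using assms by auto
  then have i2: "(k-1) * ((m-k-1) choose (k-1)) = (m-k-1) * Y"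
    unfolding Y_def using binomial_absorption[of "k-2" "m-k-1"] by simp
  have cubic: "(m-1)*(m-2)*(m-3) < X * Y * (k-1)^2 * (m-k)"
    unfolding X_def Y_def by (rule cubic_lt_binomial_product[OF assms])
  have "0 < X * Y" using cubic by (metis gr0I mult_is_0 not_less0)
  have "0 < m-k-1" using assms by linarith
  have "0 < Z" using assms unfolding Z_def by simp
  have "((m-1) choose (k-1)) * ((m-k-1) choose (k-1)) * Z
      = ((k-1)*(m-k)*(m-k-1)*((m-1) choose (k-1))) * ((k-1) * ((m-k-1) choose (k-1)))"
    unfolding Z_def by (simp add: power2_eq_square ac_simps)
  also have "\<dots> = (X * Y) * ((m-1)*(m-2)*(m-3) * (m-k-1))"
    unfolding i1 i2 by (simp add: ac_simps)
  also have "\<dots> < (X * Y) * ((X * Y * (k-1)^2 * (m-k)) * (m-k-1))"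
    using cubic \<open>0 < m-k-1\<close> \<open>0 < X * Y\<close> by simp
  also have "\<dots> = (X * Y)^2 * Z" unfolding Z_def by (simp add: power2_eq_square ac_simps)
  finally show ?thesis using \<open>0 < Z\<close> unfolding X_def Y_def by simp
qed

lemma act_part_tau_two_block_family:
  assumes "P \<in> two_block_family D k 1
      {A. A \<subseteq> D - {1} \<and> card A = k - 1 \<and> 2 \<in> A \<and> 3 \<notin> A \<and> 4 \<notin> A} (\<lambda>_. 3) (\<lambda>_. 4)"
  shows "act_part tau P = P"
proof -
  obtain A C Q where A: "A \<subseteq> D - {1}" "2 \<in> A" "3 \<notin> A" "4 \<notin> A"
    and C: "C \<subseteq> D - insert 1 A - {3}" "4 \<in> C"
    and Q: "Q \<in> block_partitions (D - insert 1 A - insert 3 C) k"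
    and P: "P = insert (insert 1 A) (insert (insert 3 C) Q)"
    by (rule two_block_familyE[OF assms]) blast
  have "tau ` B = B" if "B \<in> P" for B
  proof -
    have "B = insert 1 A \<or> B = insert 3 C \<or> B \<subseteq> D - insert 1 A - insert 3 C"
      using that P block_partitions_block_subset[OF Q] by auto
    moreover have "tau ` insert 1 A = insert 1 A" by (rule tau_image_eq) (use A in auto)
    moreover have "tau ` insert 3 C = insert 3 C" by (rule tau_image_eq) (use A C in auto)
    moreover have "tau ` B = B" if "B \<subseteq> D - insert 1 A - insert 3 C"
      by (rule tau_image_eq) (use that A C in auto)
    ultimately show ?thesis by blast
  qed
  then show ?thesis by (intro act_part_eq_if_involution[OF tau_tau]) auto
qed

text \<open>With \<open>k = 2\<close> the two prescribed blocks run through the three perfect matchings of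
  \<open>{1, 2, 3, 4}\<close>, which \<open>tau\<close> permutes among themselves.\<close>

lemma act_part_tau_two_block_family_matchings:
  assumes zw: "z {2} = 3" "w {2} = 4" "z {3} = 2" "w {3} = 4" "z {4} = 2" "w {4} = 3"
    and "P \<in> two_block_family D 2 1 {{2}, {3}, {4}} z w"
  shows "act_part tau P = P"
proof -
  obtain A C Q where A: "A \<in> {{2}, {3}, {4}}"
    and C: "C \<subseteq> D - insert 1 A - {z A}" "w A \<in> C" "card C = 2 - 1"
    and Q: "Q \<in> block_partitions (D - insert 1 A - insert (z A) C) 2"
    and P: "P = insert (insert 1 A) (insert (insert (z A) C) Q)"
    by (rule two_block_familyE[OF assms(7)])
  have C_eq: "C = {w A}" using C by (auto simp: card_Suc_eq)
  consider "A = {2}" | "A = {3}" | "A = {4}" using A by blast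
  then have "insert 1 A \<union> insert (z A) C = {1, 2, 3, 4}
      \<and> tau ` insert 1 A \<in> P \<and> tau ` insert (z A) C \<in> P"
    by cases (use tau_simps in \<open>simp_all add: P C_eq zw insert_commute\<close>)
  then have matching: "insert 1 A \<union> insert (z A) C = {1, 2, 3, 4}"
    and matching_tau: "tau ` insert 1 A \<in> P" "tau ` insert (z A) C \<in> P"
    by blast+
  have Q_tau: "tau ` B = B" if "B \<in> Q" for B
  proof (rule tau_image_eq)
    have "B \<inter> {1, 2, 3, 4} = {}"
      using block_partitions_block_subset[OF Q that] unfolding matching[symmetric] by blast
    then show "1 \<in> B \<longleftrightarrow> 2 \<in> B" "3 \<in> B \<longleftrightarrow> 4 \<in> B" by auto
  qed
  have "tau ` B \<in> P" if "B \<in> P" for B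
  proof -
    have "B = insert 1 A \<or> B = insert (z A) C \<or> B \<in> Q" using that unfolding P by simp
    then show ?thesis using matching_tau Q_tau[of B] that by (elim disjE) simp_all
  qed
  then show ?thesis by (intro act_part_eq_if_involution[OF tau_tau])
qed

lemma tau_fixed_family_large:
  assumes "9 \<le> m" "3 \<le> k" "m = k * r" "2 \<le> r"
  shows "\<exists>F \<subseteq> block_partitions {1..m} k. (\<forall>P\<in>F. act_part tau P = P)
           \<and> block_partition_count k m < (card F)^2"
proof -
  define AA where "AA = {A. A \<subseteq> {1..m} - {1} \<and> card A = k - 1 \<and> 2 \<in> A \<and> 3 \<notin> A \<and> 4 \<notin> A}"
  define F where "F = two_block_family {1..m} k 1 AA (\<lambda>_. 3) (\<lambda>_. 4)"
  have "2 * k \<le> m" using assms(3,4) by simp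
  have AA_sub: "AA \<subseteq> {A. A \<subseteq> {1..m} - {1} \<and> card A = k - 1}" unfolding AA_def by auto
  have "F \<subseteq> block_partitions {1..m} k"
    and card_F: "card F = card AA * (((m - k - 2) choose (k - 2)) * block_partition_count k (m - 2 * k))"
    unfolding F_def using two_block_family_subset_card[of "{1..m}" 1 k m AA] AA_sub assms(1,2)
    by (auto simp: AA_def)
  have "AA = {A. A \<subseteq> {1..m} - {1, 3, 4} \<and> card A = k - 1 \<and> 2 \<in> A}" unfolding AA_def by auto
  also have "card \<dots> = card ({1..m} - {1, 3, 4} - {2}) choose (k - 1 - 1)"
    by (rule card_subsets_containing) (use assms(1,2) in auto)
  also have "{1..m} - {1, 3, 4} - {2} = {1..m} - {1, 2, 3, 4}" by auto
  also have "card \<dots> = m - 4" using assms(1) by (subst card_Diff_subset) auto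
  finally have card_AA: "card AA = (m - 4) choose (k - 2)" by (simp add: numeral_2_eq_2)
  define n0 where "n0 = block_partition_count k (m - 2 * k)"
  have "m - 2 * k = k * (r - 2)" using assms(3) by (simp add: algebra_simps diff_mult_distrib2)
  then have "0 < n0" unfolding n0_def using block_partition_count_mult_pos assms(2) by simp
  have "block_partition_count k m = (((m - 1) choose (k - 1)) * ((m - k - 1) choose (k - 1))) * n0"
    using assms(2) \<open>2 * k \<le> m\<close>
    by (simp add: n0_def block_partition_count_step diff_diff_left mult_2)
  also have "\<dots> < (((m - 4) choose (k - 2)) * ((m - k - 2) choose (k - 2)))^2 * n0"
    using binomial_product_lt_square[OF assms(1,2) \<open>2 * k \<le> m\<close>] \<open>0 < n0\<close> by simp
  also have "\<dots> \<le> (((m - 4) choose (k - 2)) * ((m - k - 2) choose (k - 2)))^2 * n0^2"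
    using \<open>0 < n0\<close> by (simp add: power2_eq_square)
  also have "\<dots> = (card F)^2"
    unfolding card_F card_AA n0_def by (simp add: power_mult_distrib)
  finally have "block_partition_count k m < (card F)^2" .
  moreover have "\<forall>P\<in>F. act_part tau P = P"
    unfolding F_def AA_def using act_part_tau_two_block_family by blast
  ultimately show ?thesis using \<open>F \<subseteq> block_partitions {1..m} k\<close> by blast
qed

lemma tau_fixed_family_pairs:
  assumes "10 \<le> m" "even m"
  shows "\<exists>F \<subseteq> block_partitions {1..m} 2. (\<forall>P\<in>F. act_part tau P = P)
           \<and> block_partition_count 2 m < (card F)^2"
proof -
  define z :: "nat set \<Rightarrow> nat" where "z A = (if A = {2} then 3 else 2)" for A
  define w :: "nat set \<Rightarrow> nat" where "w A = (if A = {4} then 3 else 4)" for A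
  define F where "F = two_block_family {1..m} 2 1 {{2}, {3}, {4}} z w"
  have zw: "z A \<in> {1..m} - insert 1 A \<and> w A \<in> {1..m} - insert 1 A \<and> w A \<noteq> z A"
    if "A \<in> {{2}, {3}, {4}}" for A
    using that assms(1) by (auto simp: z_def w_def)
  have AA: "{{2}, {3}, {4}} \<subseteq> {A. A \<subseteq> {1..m} - {1} \<and> card A = 2 - 1}"
    using assms(1) by auto
  have "F \<subseteq> block_partitions {1..m} 2"
    and card_F: "card F = card {{2::nat}, {3}, {4}}
      * (((m - 2 - 2) choose (2 - 2)) * block_partition_count 2 (m - 2 * 2))"
    unfolding F_def using two_block_family_subset_card[OF _ _ _ _ AA zw] assms(1) by auto
  have "card F = 3 * block_partition_count 2 (m - 4)" unfolding card_F by simp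
  have step: "block_partition_count 2 n = (n - 1) * ((n - 3) * block_partition_count 2 (n - 4))"
    if "4 \<le> n" for n
    using that block_partition_count_step[of 2 n] block_partition_count_step[of 2 "n - 2"]
    by (simp add: numeral_eq_Suc)
  have "m - 8 = 2 * ((m - 8) div 2)" using assms by simp
  then have "1 \<le> block_partition_count 2 (m - 8)"
    using block_partition_count_mult_pos[of 2 "(m - 8) div 2"] by simp
  then have lower: "(m - 5) * (m - 7) \<le> block_partition_count 2 (m - 4)"
    using step[of "m - 4"] assms(1) by (simp add: diff_diff_left)
  obtain j where "m = j + 10" using assms(1) by (metis add.commute le_add_diff_inverse)
  then have "(m - 1) * (m - 3) < 9 * ((m - 5) * (m - 7))" by (simp add: algebra_simps)
  then have "block_partition_count 2 m < 9 * ((m - 5) * (m - 7)) * block_partition_count 2 (m - 4)"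
    using step[of m] assms(1) lower by simp
  also have "\<dots> \<le> (card F)^2"
    using lower \<open>card F = 3 * block_partition_count 2 (m - 4)\<close> by (simp add: power2_eq_square)
  finally have "block_partition_count 2 m < (card F)^2" .
  moreover have "\<forall>P\<in>F. act_part tau P = P"
    unfolding F_def using act_part_tau_two_block_family_matchings[of z w] by (simp add: z_def w_def)
  ultimately show ?thesis using \<open>F \<subseteq> block_partitions {1..m} 2\<close> by blast
qed

lemma tau_fixed_family:
  assumes "9 \<le> m" "m = k * r" "1 < k" "k < m"
  shows "\<exists>F \<subseteq> block_partitions {1..m} k. (\<forall>P\<in>F. act_part tau P = P)
           \<and> block_partition_count k m < (card F)^2"
proof -
  have "2 \<le> r"
  proof (rule ccontr)
    assume "\<not> 2 \<le> r"
    then have "r \<le> 1" by simp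
    then have "k * r \<le> k" by (metis mult.right_neutral mult_le_mono2)
    then show False using assms(2,4) by simp
  qed
  show ?thesis
  proof (cases "k = 2")
    case True
    then have "m = 2 * r" using assms(2) by simp
    then have "10 \<le> m" "even m" using assms(1) by presburger+
    then show ?thesis using tau_fixed_family_pairs True by simp
  next
    case False
    then have "3 \<le> k" using assms(3) by simp
    then show ?thesis by (rule tau_fixed_family_large[OF assms(1) _ assms(2) \<open>2 \<le> r\<close>])
  qed
qed

lemma card_le_ifix:
  assumes "finite T" "finite \<Omega>" "t \<in> T" "is_involution t"
    and "F \<subseteq> \<Omega>" "\<forall>P\<in>F. act_part t P = P"
  shows "card F \<le> ifix T \<Omega>"
proof -
  have "card F \<le> fix_count \<Omega> t"
    unfolding fix_count_def using assms(2,5,6) by (intro card_mono) auto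
  also have "\<dots> \<le> ifix T \<Omega>"
  proof -
    have "{fix_count \<Omega> t | t. t \<in> T \<and> is_involution t}
        = fix_count \<Omega> ` {t \<in> T. is_involution t}" by auto
    then show ?thesis unfolding ifix_def using assms(1,3,4) by (auto intro: Max_ge)
  qed
  finally show ?thesis .
qed

theorem proposition2p5:
  fixes m k r :: nat and G :: "(nat \<Rightarrow> nat) monoid" and P0 :: "nat set set"
    and H :: "(nat \<Rightarrow> nat) set"
  assumes "m \<ge> 9"
    and "m = k * r" and "1 < k" and "k < m"
    and "G = alt_group m \<or> G = sym_group m"
    and "P0 \<in> uniform_partitions m k r"
    and "H = {p \<in> carrier G. act_part p P0 = P0}"
    and "maximal_subgroup H G"
  shows "real (ifix (carrier (alt_group m)) (uniform_partitions m k r))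
           > sqrt (real (card (uniform_partitions m k r)))"
proof -
  obtain F where F: "F \<subseteq> block_partitions {1..m} k" "\<forall>P\<in>F. act_part tau P = P"
    and large: "block_partition_count k m < (card F)^2"
    using tau_fixed_family[OF assms(1-4)] by (elim exE conjE)
  have \<Omega>: "uniform_partitions m k r = block_partitions {1..m} k"
    using uniform_partitions_eq_block_partitions assms(2,3) by simp
  have "finite (carrier (alt_group m))"
    by (rule finite_subset[OF _ finite_permutations[of "{1..m}"]])
       (auto simp: alt_group_def sym_group_def)
  then have "card F \<le> ifix (carrier (alt_group m)) (uniform_partitions m k r)"
    unfolding \<Omega> using assms(1)
    by (intro card_le_ifix[OF _ finite_block_partitions tau_in_alt_group is_involution_tau F]) simp_all
  moreover have "sqrt (real (card (uniform_partitions m k r))) < card F"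
  proof -
    have "card (uniform_partitions m k r) < (card F)^2"
      unfolding \<Omega> using large card_block_partitions[of "{1..m}" k] assms(3) by simp
    then show ?thesis by (simp add: real_less_lsqrt)
  qed
  ultimately show ?thesis by linarith
qed

end
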